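(* Let $(K,\le)$ be a linearly ordered set which is compact in its order topology, and let $d:K\times K\to[0,+\infty)$ be a symmetric map with $d(x,y)>0$ whenever $x\neq y$, such that for every $x<y$ in $K$ with $]x,y[\neq\emptyset$ and every $\varepsilon>0$ there exist $u<v$ with $]u,v[$ a nonempty open interval contained in $]x,y[$ and $\sup\{d(s,t): s,t\in\,]u,v[\}<\varepsilon$. Then $K$ is almost totally disconnected.
   Context: Here $]x,y[=\{z\in K: x<z<y\}$. For a set $\Gamma$, $\Sigma_0^1[0,1]^\Gamma$ is the subspace of $[0,1]^\Gamma$ (product topology) consisting of those $x$ with $x_\gamma\in\{0,1\}$ for all but countably many $\gamma$. A compact space is almost totally disconnected if it is homeomorphic to a subspace of $\Sigma_0^1[0,1]^\Gamma$ for some set $\Gamma$. *)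

theory Defs
  imports "HOL-Analysis.Analysis"
begin

definition Sigma01 :: "'g set \<Rightarrow> ('g \<Rightarrow> real) set" where
  "Sigma01 \<Gamma> = {x \<in> PiE \<Gamma> (\<lambda>_. {0..1}). countable {\<gamma> \<in> \<Gamma>. x \<gamma> \<notin> {0, 1}}}"

definition cube_top :: "'g set \<Rightarrow> ('g \<Rightarrow> real) topology" where
  "cube_top \<Gamma> = product_topology (\<lambda>_. top_of_set {0..1}) \<Gamma>"

text \<open>Index sets \<open>\<Gamma>\<close> are taken as subsets of the type \<open>'a \<Rightarrow> real\<close>.\<close>
definition almost_totally_disconnected :: "'a topology \<Rightarrow> bool" where
  "almost_totally_disconnected X \<longleftrightarrow>
     (\<exists>(\<Gamma> :: ('a \<Rightarrow> real) set) T. T \<subseteq> Sigma01 \<Gamma> \<and>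
        X homeomorphic_space subtopology (cube_top \<Gamma>) T)"

end

theory Submission
  imports Defs
begin

text \<open>
  A compact Hausdorff space \<open>X\<close> is almost totally disconnected as soon as it
  carries a point-separating family \<open>\<Gamma>\<close> of continuous maps into \<open>[0,1]\<close> such that at every
  point only countably many members of \<open>\<Gamma>\<close> take a value outside \<open>{0,1}\<close>: the evaluation map
  into \<open>[0,1]^\<Gamma>\<close> is then an embedding into \<open>\<Sigma>_0^1[0,1]^\<Gamma>\<close>.

  For the ordered compactum \<open>K\<close> such a family consists of Urysohn "step functions" (\<open>0\<close> left
  of \<open>u\<close>, \<open>1\<close> right of \<open>v\<close>), one for each interval \<open>(u,v)\<close> of a family \<open>P\<close> that
  (i) separates points (every \<open>x < y\<close> admits \<open>(u,v) \<in> P\<close> with \<open>x \<le> u < v \<le> y\<close>) and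
  (ii) is point-countable (each \<open>x\<close> lies in only countably many open intervals \<open>]u,v[\<close>).
  We take for \<open>P\<close> all gaps \<open>u < v\<close> with \<open>]u,v[ = {}\<close> together with, for every \<open>n\<close>, a maximal
  pairwise disjoint family of nonempty open intervals of \<open>d\<close>-diameter below \<open>1/(n+1)\<close>.
  Disjointness gives (ii); maximality and the density hypothesis give (i), because an
  interval of small diameter cannot contain two points at \<open>d\<close>-distance at least \<open>1/(n+1)\<close>.
\<close>

section \<open>An embedding criterion for almost total disconnectedness\<close>

lemma almost_totally_disconnected_by_separating_family:
  fixes X :: "'a topology" and \<Gamma> :: "('a \<Rightarrow> real) set"
  assumes compact: "compact_space X" and Hausdorff: "Hausdorff_space X"
    and cont: "\<And>f. f \<in> \<Gamma> \<Longrightarrow> continuous_map X (top_of_set {0..1}) f"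
    and separating: "\<And>x y. x \<in> topspace X \<Longrightarrow> y \<in> topspace X \<Longrightarrow> x \<noteq> y \<Longrightarrow> \<exists>f\<in>\<Gamma>. f x \<noteq> f y"
    and countable_fractional: "\<And>x. x \<in> topspace X \<Longrightarrow> countable {f \<in> \<Gamma>. f x \<notin> {0, 1}}"
  shows "almost_totally_disconnected X"
proof -
  define e where "e x = restrict (\<lambda>f. f x) \<Gamma>" for x
  have e_cont: "continuous_map X (cube_top \<Gamma>) e"
    unfolding cube_top_def continuous_map_componentwise
  proof
    show "e ` topspace X \<subseteq> extensional \<Gamma>" by (auto simp: e_def)
    show "\<forall>f\<in>\<Gamma>. continuous_map X (top_of_set {0..1}) (\<lambda>x. e x f)"
      using cont by (simp add: e_def)
  qed
  have e_inj: "inj_on e (topspace X)"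
  proof (rule inj_onI)
    fix x y assume "x \<in> topspace X" "y \<in> topspace X" "e x = e y"
    then show "x = y" using separating[of x y] by (metis e_def restrict_apply')
  qed
  have "Hausdorff_space (cube_top \<Gamma>)"
    unfolding cube_top_def Hausdorff_space_product_topology
    by (simp add: Hausdorff_space_subtopology)
  then have "embedding_map X (cube_top \<Gamma>) e"
    using continuous_imp_embedding_map[OF e_cont compact _ e_inj] by blast
  then have "X homeomorphic_space subtopology (cube_top \<Gamma>) (e ` topspace X)"
    by (rule embedding_map_imp_homeomorphic_space)
  moreover have "e ` topspace X \<subseteq> Sigma01 \<Gamma>"
  proof
    fix z assume "z \<in> e ` topspace X"
    then obtain x where x: "x \<in> topspace X" "z = e x" by blast
    have "e x \<in> PiE \<Gamma> (\<lambda>_. {0..1})"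
      using cont x(1) by (force simp: e_def continuous_map_def)
    moreover have "{f \<in> \<Gamma>. e x f \<notin> {0, 1}} = {f \<in> \<Gamma>. f x \<notin> {0, 1}}"
      by (auto simp: e_def)
    ultimately show "z \<in> Sigma01 \<Gamma>"
      using countable_fractional[OF x(1)] x(2) by (simp add: Sigma01_def)
  qed
  ultimately show ?thesis
    unfolding almost_totally_disconnected_def by blast
qed

section \<open>Step functions on a compact linear order\<close>

lemma Hausdorff_space_euclidean_t2: "Hausdorff_space (euclidean :: 'a::t2_space topology)"
  unfolding Hausdorff_space_def
  by (metis disjnt_def hausdorff open_openin topspace_euclidean UNIV_I)

text \<open>A compact linearly ordered space is Hausdorff, hence normal, so Urysohn's lemma
  yields a continuous map into \<open>[0,1]\<close> that vanishes on \<open>{..u}\<close> and is \<open>1\<close> on \<open>{v..}\<close>.\<close>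
lemma compact_order_step_function:
  fixes u v :: "'a::linorder_topology"
  assumes "compact (UNIV :: 'a set)" and "u < v"
  shows "\<exists>f. continuous_map euclidean (top_of_set {0..1}) f \<and>
             (\<forall>z. z \<le> u \<longrightarrow> f z = 0) \<and> (\<forall>z. v \<le> z \<longrightarrow> f z = (1::real))"
proof -
  have "compact_space (euclidean :: 'a topology)"
    using assms(1) by (simp add: compact_space_def)
  moreover have "Hausdorff_space (euclidean :: 'a topology)"
    by (rule Hausdorff_space_euclidean_t2)
  ultimately have "normal_space (euclidean :: 'a topology)"
    using compact_Hausdorff_or_regular_imp_normal_space by blast
  moreover have "disjnt {..u} {v..}"
    using assms(2) by (auto simp: disjnt_def)
  ultimately obtain f where "continuous_map euclidean (top_of_set {0..1::real}) f"
      "f ` {..u} \<subseteq> {0}" "f ` {v..} \<subseteq> {1}"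
    using Urysohn_lemma[of euclidean "{..u}" "{v..}" 0 1] by auto
  then show ?thesis by auto
qed

lemma compact_order_almost_totally_disconnected:
  fixes P :: "('a::linorder_topology \<times> 'a) set"
  assumes compact: "compact (UNIV :: 'a set)"
    and proper: "\<And>p. p \<in> P \<Longrightarrow> fst p < snd p"
    and separating: "\<And>x y. x < y \<Longrightarrow> \<exists>p\<in>P. x \<le> fst p \<and> snd p \<le> y"
    and point_countable: "\<And>x. countable {p \<in> P. x \<in> {fst p<..<snd p}}"
  shows "almost_totally_disconnected (euclidean :: 'a topology)"
proof -
  define G where "G p = (SOME f. continuous_map euclidean (top_of_set {0..1}) f \<and>
      (\<forall>z. z \<le> fst p \<longrightarrow> f z = 0) \<and> (\<forall>z. snd p \<le> z \<longrightarrow> f z = (1::real)))" for p :: "'a \<times> 'a"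
  have G: "continuous_map euclidean (top_of_set {0..1}) (G p)"
      "\<And>z. z \<le> fst p \<Longrightarrow> G p z = 0" "\<And>z. snd p \<le> z \<Longrightarrow> G p z = 1"
    if "p \<in> P" for p
    using someI_ex[OF compact_order_step_function[OF compact proper[OF that]]]
    unfolding G_def by simp_all
  have separates_ordered: "\<exists>f\<in>G ` P. f x \<noteq> f y" if xy: "x < y" for x y
  proof -
    obtain p where p: "p \<in> P" "x \<le> fst p" "snd p \<le> y"
      using separating[OF xy] by blast
    then have "G p x \<noteq> G p y" using G(2,3)[OF p(1)] by simp
    then show ?thesis using p(1) by blast
  qed
  show ?thesis
  proof (rule almost_totally_disconnected_by_separating_family)
    show "compact_space (euclidean :: 'a topology)"
      using compact by (simp add: compact_space_def)
    show "Hausdorff_space (euclidean :: 'a topology)"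
      by (rule Hausdorff_space_euclidean_t2)
    show "continuous_map euclidean (top_of_set {0..1}) f" if "f \<in> G ` P" for f
      using that G(1) by blast
    show "\<exists>f\<in>G ` P. f x \<noteq> f y" if "x \<noteq> y" for x y :: 'a
    proof -
      from that consider "x < y" | "y < x" by (rule linorder_neqE)
      then show ?thesis
        by cases (metis separates_ordered)+
    qed
    show "countable {f \<in> G ` P. f x \<notin> {0, 1}}" for x
    proof (rule countable_subset)
      show "{f \<in> G ` P. f x \<notin> {0, 1}} \<subseteq> G ` {p \<in> P. x \<in> {fst p<..<snd p}}"
      proof
        fix f assume "f \<in> {f \<in> G ` P. f x \<notin> {0, 1}}"
        then obtain p where p: "p \<in> P" "f = G p" "G p x \<notin> {0, 1}" by blast
        then have "fst p < x" "x < snd p"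
          using G(2,3)[OF p(1), of x] by (auto simp: not_le[symmetric])
        then show "f \<in> G ` {p \<in> P. x \<in> {fst p<..<snd p}}" using p(1,2) by auto
      qed
      show "countable (G ` {p \<in> P. x \<in> {fst p<..<snd p}})"
        using point_countable by blast
    qed
  qed
qed

section \<open>A point-countable separating family of intervals\<close>

definition maximal_disjoint_subfamily :: "'b set \<Rightarrow> ('b \<Rightarrow> 'c set) \<Rightarrow> 'b set \<Rightarrow> bool" where
  "maximal_disjoint_subfamily A I S \<longleftrightarrow> S \<subseteq> A \<and> pairwise (\<lambda>p q. disjnt (I p) (I q)) S \<and>
     (\<forall>q\<in>A. q \<notin> S \<longrightarrow> (\<exists>p\<in>S. \<not> disjnt (I p) (I q)))"

lemma maximal_disjoint_subfamily_exists: "\<exists>S. maximal_disjoint_subfamily A I S"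
proof -
  define D where "D = {S. S \<subseteq> A \<and> pairwise (\<lambda>p q. disjnt (I p) (I q)) S}"
  have "\<Union>C \<in> D" if "C \<in> chains D" for C
  proof -
    have C: "chain\<^sub>\<subseteq> C" "C \<subseteq> D" using that by (auto simp: chains_def)
    then have "pairwise (\<lambda>p q. disjnt (I p) (I q)) (\<Union>C)"
      by (intro pairwise_chain_Union) (auto simp: D_def)
    moreover have "\<Union>C \<subseteq> A" using C(2) by (auto simp: D_def)
    ultimately show ?thesis by (simp add: D_def)
  qed
  then obtain M where M: "M \<in> D" "\<And>S. S \<in> D \<Longrightarrow> M \<subseteq> S \<Longrightarrow> S = M"
    using Zorn_Lemma[of D] by blast
  have "\<exists>p\<in>M. \<not> disjnt (I p) (I q)" if "q \<in> A" "q \<notin> M" for q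
  proof (rule ccontr)
    assume "\<not> ?thesis"
    then have "insert q M \<in> D"
      using M(1) that(1) by (auto simp: D_def pairwise_insert disjnt_sym)
    then show False using M(2)[of "insert q M"] that(2) by blast
  qed
  with M(1) show ?thesis unfolding maximal_disjoint_subfamily_def D_def by auto
qed

lemma pairwise_disjnt_point_countable:
  assumes "pairwise (\<lambda>p q. disjnt (I p) (I q)) S"
  shows "countable {p \<in> S. x \<in> I p}"
proof (cases "{p \<in> S. x \<in> I p} = {}")
  case False
  then obtain p where p: "p \<in> S" "x \<in> I p" by blast
  have "{p \<in> S. x \<in> I p} \<subseteq> {p}"
    using assms p unfolding pairwise_def disjnt_def by blast
  then show ?thesis by (rule countable_subset) simp
qed (simp only: countable_empty)

definition small_interval :: "('a::linorder \<Rightarrow> 'a \<Rightarrow> real) \<Rightarrow> real \<Rightarrow> 'a \<times> 'a \<Rightarrow> bool" where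
  "small_interval d \<epsilon> p \<longleftrightarrow> fst p < snd p \<and> {fst p<..<snd p} \<noteq> {} \<and>
     (\<exists>c < \<epsilon>. \<forall>s\<in>{fst p<..<snd p}. \<forall>t\<in>{fst p<..<snd p}. d s t \<le> c)"

text \<open>By density some small
  interval lies in \<open>]p,q[\<close>, so some member \<open>]u,v[\<close> of \<open>S\<close> meets \<open>]p,q[\<close>; it cannot contain
  \<open>x\<close> together with \<open>p\<close>, nor \<open>q\<close> together with \<open>y\<close>, hence \<open>x \<le> u\<close> and \<open>v \<le> y\<close>.\<close>
lemma maximal_small_family_separates:
  fixes d :: "'a::linorder \<Rightarrow> 'a \<Rightarrow> real"
  assumes dense_small: "\<exists>w. small_interval d \<epsilon> w \<and> {fst w<..<snd w} \<subseteq> {p<..<q}"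
    and family: "\<And>w. w \<in> S \<Longrightarrow> small_interval d \<epsilon> w"
    and maximal: "\<And>w. small_interval d \<epsilon> w \<Longrightarrow> w \<notin> S \<Longrightarrow>
        \<exists>w'\<in>S. \<not> disjnt {fst w'<..<snd w'} {fst w<..<snd w}"
    and order: "x < p" "p < q" "q < y"
    and far: "\<epsilon> \<le> d x p" "\<epsilon> \<le> d q y"
  shows "\<exists>w\<in>S. x \<le> fst w \<and> snd w \<le> y"
proof -
  obtain w0 where w0: "small_interval d \<epsilon> w0" "{fst w0<..<snd w0} \<subseteq> {p<..<q}"
    using dense_small by blast
  obtain w where w: "w \<in> S" "\<not> disjnt {fst w<..<snd w} {fst w0<..<snd w0}"
  proof (cases "w0 \<in> S")
    case True
    then show ?thesis using that[of w0] w0(1) by (auto simp: small_interval_def disjnt_def)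
  next
    case False
    then show ?thesis using maximal[OF w0(1)] that by blast
  qed
  obtain r where r: "fst w < r" "r < snd w" "p < r" "r < q"
    using w(2) w0(2) unfolding disjnt_def by fastforce
  obtain c where c: "c < \<epsilon>" "\<And>s t. s \<in> {fst w<..<snd w} \<Longrightarrow> t \<in> {fst w<..<snd w} \<Longrightarrow> d s t \<le> c"
    using family[OF w(1)] unfolding small_interval_def by blast
  have "x \<le> fst w"
  proof (rule ccontr)
    assume "\<not> x \<le> fst w"
    then have "x \<in> {fst w<..<snd w}" "p \<in> {fst w<..<snd w}"
      using r order by auto
    then have "d x p \<le> c" by (rule c(2))
    then show False using c(1) far(1) by linarith
  qed
  moreover have "snd w \<le> y"
  proof (rule ccontr)
    assume "\<not> snd w \<le> y"
    then have "q \<in> {fst w<..<snd w}" "y \<in> {fst w<..<snd w}"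
      using r order by auto
    then have "d q y \<le> c" by (rule c(2))
    then show False using c(1) far(2) by linarith
  qed
  ultimately show ?thesis using w(1) by blast
qed

lemma gap_or_inner_interval:
  fixes x y :: "'a::linorder"
  assumes "x < y"
  obtains (gap) a b where "x \<le> a" "a < b" "b \<le> y" "{a<..<b} = {}"
    | (inner) p q where "x < p" "p < q" "q < y" "{p<..<q} \<noteq> {}"
proof (cases "{x<..<y} = {}")
  case True
  show ?thesis by (rule gap[of x y]) (simp_all add: assms True less_imp_le)
next
  case False
  then obtain p where p: "x < p" "p < y" by auto
  show ?thesis
  proof (cases "{p<..<y} = {}")
    case True
    show ?thesis by (rule gap[of p y]) (simp_all add: p True less_imp_le)
  next
    case False
    then obtain q where q: "p < q" "q < y" by auto
    show ?thesis
    proof (cases "{p<..<q} = {}")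
      case True
      show ?thesis by (rule gap[of p q]) (simp_all add: p q True less_imp_le)
    next
      case False
      show ?thesis by (rule inner[of p q]) (simp_all add: p q False)
    qed
  qed
qed

lemma point_countable_separating_intervals:
  fixes d :: "'a::linorder \<Rightarrow> 'a \<Rightarrow> real"
  assumes positive: "\<And>x y. x \<noteq> y \<Longrightarrow> d x y > 0"
    and dense_small: "\<And>x y \<epsilon>. x < y \<Longrightarrow> {x<..<y} \<noteq> {} \<Longrightarrow> \<epsilon> > 0 \<Longrightarrow>
           \<exists>w. small_interval d \<epsilon> w \<and> {fst w<..<snd w} \<subseteq> {x<..<y}"
  obtains P :: "('a \<times> 'a) set" where "\<And>p. p \<in> P \<Longrightarrow> fst p < snd p"
    "\<And>x y. x < y \<Longrightarrow> \<exists>p\<in>P. x \<le> fst p \<and> snd p \<le> y"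
    "\<And>x. countable {p \<in> P. x \<in> {fst p<..<snd p}}"
proof -
  define \<epsilon> :: "nat \<Rightarrow> real" where "\<epsilon> n = inverse (real (Suc n))" for n
  define I :: "'a \<times> 'a \<Rightarrow> 'a set" where "I p = {fst p<..<snd p}" for p
  have "\<forall>n. \<exists>S. maximal_disjoint_subfamily (Collect (small_interval d (\<epsilon> n))) I S"
    using maximal_disjoint_subfamily_exists by blast
  then obtain S where "\<forall>n. maximal_disjoint_subfamily (Collect (small_interval d (\<epsilon> n))) I (S n)"
    by (rule choice[THEN exE])
  then have S: "\<And>n. S n \<subseteq> Collect (small_interval d (\<epsilon> n))"
      "\<And>n. pairwise (\<lambda>p q. disjnt (I p) (I q)) (S n)"
      "\<And>n w. small_interval d (\<epsilon> n) w \<Longrightarrow> w \<notin> S n \<Longrightarrow> \<exists>w'\<in>S n. \<not> disjnt (I w') (I w)"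
    unfolding maximal_disjoint_subfamily_def by blast+
  define P where "P = {p. fst p < snd p \<and> I p = {}} \<union> (\<Union>n. S n)"
  show ?thesis
  proof (rule that[of P])
    show "fst p < snd p" if "p \<in> P" for p
      using that S(1) unfolding P_def small_interval_def by blast
  next
    fix x y :: 'a assume "x < y"
    then show "\<exists>p\<in>P. x \<le> fst p \<and> snd p \<le> y"
    proof (cases rule: gap_or_inner_interval)
      case (gap a b)
      then show ?thesis by (intro bexI[of _ "(a, b)"]) (simp_all add: P_def I_def)
    next
      case (inner p q)
      have "0 < min (d x p) (d q y)" using positive[of x p] positive[of q y] inner by simp
      then obtain n where n: "\<epsilon> n < min (d x p) (d q y)"
        using reals_Archimedean unfolding \<epsilon>_def by blast
      have "\<exists>w\<in>S n. x \<le> fst w \<and> snd w \<le> y"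
      proof (rule maximal_small_family_separates)
        show "\<exists>w. small_interval d (\<epsilon> n) w \<and> {fst w<..<snd w} \<subseteq> {p<..<q}"
          using dense_small[OF inner(2,4)] by (simp add: \<epsilon>_def)
        show "small_interval d (\<epsilon> n) w" if "w \<in> S n" for w
          using S(1) that by blast
        show "\<exists>w'\<in>S n. \<not> disjnt {fst w'<..<snd w'} {fst w<..<snd w}"
          if "small_interval d (\<epsilon> n) w" "w \<notin> S n" for w
          using S(3)[OF that] unfolding I_def .
        show "\<epsilon> n \<le> d x p" "\<epsilon> n \<le> d q y" using n by simp_all
      qed (use inner in blast)+
      then show ?thesis unfolding P_def by blast
    qed
  next
    fix x :: 'a
    have "{p \<in> P. x \<in> {fst p<..<snd p}} \<subseteq> (\<Union>n. {p \<in> S n. x \<in> I p})"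
      unfolding P_def I_def by blast
    moreover have "countable (\<Union>n. {p \<in> S n. x \<in> I p})"
      by (rule countable_UN) (simp_all add: pairwise_disjnt_point_countable[OF S(2)])
    ultimately show "countable {p \<in> P. x \<in> {fst p<..<snd p}}"
      by (rule countable_subset)
  qed
qed

theorem mainTheorem8:
  fixes d :: "'a::linorder_topology \<Rightarrow> 'a \<Rightarrow> real"
  assumes "compact (UNIV :: 'a set)"
    and "\<And>x y. d x y \<ge> 0"
    and "\<And>x y. d x y = d y x"
    and "\<And>x y. x \<noteq> y \<Longrightarrow> d x y > 0"
    and "\<And>x y \<epsilon>. x < y \<Longrightarrow> {x<..<y} \<noteq> {} \<Longrightarrow> \<epsilon> > 0 \<Longrightarrow>
           \<exists>u v. u < v \<and> {u<..<v} \<noteq> {} \<and> {u<..<v} \<subseteq> {x<..<y} \<and>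
             (\<exists>c < \<epsilon>. \<forall>s\<in>{u<..<v}. \<forall>t\<in>{u<..<v}. d s t \<le> c)"
  shows "almost_totally_disconnected (euclidean :: 'a topology)"
proof -
  have dense_small: "\<exists>w. small_interval d \<epsilon> w \<and> {fst w<..<snd w} \<subseteq> {x<..<y}"
    if xy: "x < y" "{x<..<y} \<noteq> {}" "\<epsilon> > 0" for x y :: 'a and \<epsilon> :: real
  proof -
    obtain u v where "u < v" "{u<..<v} \<noteq> {}" "{u<..<v} \<subseteq> {x<..<y}"
        "\<exists>c < \<epsilon>. \<forall>s\<in>{u<..<v}. \<forall>t\<in>{u<..<v}. d s t \<le> c"
      using assms(5)[OF xy] by blast
    then have "small_interval d \<epsilon> (u, v) \<and> {fst (u, v)<..<snd (u, v)} \<subseteq> {x<..<y}"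
      unfolding small_interval_def by simp
    then show ?thesis by blast
  qed
  obtain P :: "('a \<times> 'a) set" where P: "\<And>p. p \<in> P \<Longrightarrow> fst p < snd p"
      "\<And>x y. x < y \<Longrightarrow> \<exists>p\<in>P. x \<le> fst p \<and> snd p \<le> y"
      "\<And>x. countable {p \<in> P. x \<in> {fst p<..<snd p}}"
    using point_countable_separating_intervals[of d, OF assms(4) dense_small] by blast
  show ?thesis
    by (rule compact_order_almost_totally_disconnected[OF assms(1) P])
qed

end
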